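(* Let $T$ be a rooted edge-weighted full binary tree with $n$ leaves, all root-to-leaf paths of weight $1$, every edge of weight at least $\tau\frac{\log n}{\sqrt{n}}$ for a sufficiently large constant $\tau$, whose topology is known, with experiment outcomes on all triples of leaves generated by the homogeneous noise model. Let $P=(v_0=r,v_1,\dots,v_{\ell^\ast})$ be the rightmost root-to-leaf path and $f$ the largest index such that $v_f$ is heavy. Suppose $v$ is an internal vertex lying in the left subtree of $v_\ell$ for some $1\le\ell\le f$. Then there is a procedure (Reconstruct-height-left-heavy) which, given $v$, with high probability reconstructs $h_v$ up to additive error $O\big(\alpha^{-1}\sqrt{\log n/n}\big)$.
   Context: Distances $d$ between leaves are path weights. For each unordered triple of distinct leaves a single experiment $Q(a,b,c)$ returns one pair, independently across triples, with $\Pr[Q(a,b,c)=(a,b)]=\frac{d(a,c)+d(b,c)}{2(d(a,b)+d(b,c)+d(a,c))}$ (and symmetrically). For a vertex $v$, $h_v$ is the weight of a path from $v$ to any leaf below it; $\mathsf{NL}(v)$ is the number of leaves in the subtree rooted at $v$. Children of each internal vertex are ordered so that the right child $\mathsf{rc}$ and left child $\mathsf{lc}$ satisfy $\mathsf{NL}(\mathsf{rc})\ge\mathsf{NL}(\mathsf{lc})$; the left subtree of a vertex is the subtree rooted at its left child; the rightmost path starts at the root and always goes to the right child. A vertex is heavy if $\mathsf{NL}(v)\ge\alpha n+1$ with $\alpha=\frac16$. "With high probability" means probability $1-o(1)$. *)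

theory Defs
  imports "HOL-Probability.Probability"
begin

text \<open>Node wl l wr r : wl is the weight of the edge to the left child l,
  wr the weight of the edge to the right child r.\<close>

datatype 'w btree = Leaf nat | Node 'w "'w btree" 'w "'w btree"

fun leafl :: "'w btree \<Rightarrow> nat list" where
  "leafl (Leaf x) = [x]"
| "leafl (Node _ l _ r) = leafl l @ leafl r"

definition leaves :: "'w btree \<Rightarrow> nat set" where
  "leaves t = set (leafl t)"

definition NL :: "'w btree \<Rightarrow> nat" where
  "NL t = length (leafl t)"

definition topology :: "real btree \<Rightarrow> unit btree" where
  "topology t = map_btree (\<lambda>_. ()) t"

fun weights :: "'w btree \<Rightarrow> 'w list" where
  "weights (Leaf x) = []"
| "weights (Node wl l wr r) = wl # wr # weights l @ weights r"

fun rootdist :: "real btree \<Rightarrow> nat \<Rightarrow> real" where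
  "rootdist (Leaf x) a = 0"
| "rootdist (Node wl l wr r) a =
     (if a \<in> leaves l then wl + rootdist l a else wr + rootdist r a)"

fun dist_t :: "real btree \<Rightarrow> nat \<Rightarrow> nat \<Rightarrow> real" where
  "dist_t (Leaf x) a b = 0"
| "dist_t (Node wl l wr r) a b =
     (if a \<in> leaves l \<and> b \<in> leaves l then dist_t l a b
      else if a \<in> leaves r \<and> b \<in> leaves r then dist_t r a b
      else if a \<in> leaves l then wl + rootdist l a + wr + rootdist r b
      else wr + rootdist r a + wl + rootdist l b)"

fun ordered :: "'w btree \<Rightarrow> bool" where
  "ordered (Leaf x) = True"
| "ordered (Node _ l _ r) = (NL l \<le> NL r \<and> ordered l \<and> ordered r)"

text \<open>Vertices are addressed by positions: lists of directions from the root
  (False = go to left child, True = go to right child).\<close>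
fun valid_pos :: "'w btree \<Rightarrow> bool list \<Rightarrow> bool" where
  "valid_pos t [] = True"
| "valid_pos (Leaf x) (b # p) = False"
| "valid_pos (Node _ l _ r) (b # p) = valid_pos (if b then r else l) p"

fun sub :: "'w btree \<Rightarrow> bool list \<Rightarrow> 'w btree" where
  "sub t [] = t"
| "sub (Leaf x) (b # p) = Leaf x"
| "sub (Node _ l _ r) (b # p) = sub (if b then r else l) p"

fun is_internal :: "'w btree \<Rightarrow> bool" where
  "is_internal (Leaf x) = False"
| "is_internal (Node _ _ _ _) = True"

definition height_at :: "real btree \<Rightarrow> bool list \<Rightarrow> real" where
  "height_at t p = rootdist (sub t p) (hd (leafl (sub t p)))"

definition alpha :: real where "alpha = 1 / 6"

definition heavy :: "'w btree \<Rightarrow> nat \<Rightarrow> bool list \<Rightarrow> bool" where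
  "heavy t n p \<longleftrightarrow> real (NL (sub t p)) \<ge> alpha * real n + 1"

text \<open>v_k on the rightmost path is the position replicate k True;
  f is the largest index k such that v_k is heavy.\<close>
definition rm_f :: "'w btree \<Rightarrow> nat \<Rightarrow> nat" where
  "rm_f t n = (GREATEST k. valid_pos t (replicate k True) \<and> heavy t n (replicate k True))"

text \<open>For a triple S = {a,b,c}, Q(S) returns the pair
  S - {c} with probability (d(a,c)+d(b,c)) / (2 (d(a,b)+d(b,c)+d(a,c)));
  the double sum over ordered pairs in the denominator equals 2 (d(a,b)+d(b,c)+d(a,c)).\<close>
definition triples :: "nat \<Rightarrow> nat set set" where
  "triples n = {S. S \<subseteq> {0..<n} \<and> card S = 3}"

definition excl_weight :: "real btree \<Rightarrow> nat set \<Rightarrow> nat \<Rightarrow> real" where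
  "excl_weight t S c =
     (if c \<in> S then
        (\<Sum>x\<in>S - {c}. dist_t t x c) /
        (\<Sum>x\<in>S. \<Sum>y\<in>S - {x}. dist_t t x y)
      else 0)"

definition triple_pmf :: "real btree \<Rightarrow> nat set \<Rightarrow> nat set pmf" where
  "triple_pmf t S = map_pmf (\<lambda>c. S - {c}) (embed_pmf (excl_weight t S))"

definition outcome_pmf :: "real btree \<Rightarrow> nat \<Rightarrow> (nat set \<Rightarrow> nat set) pmf" where
  "outcome_pmf t n = Pi_pmf (triples n) {} (triple_pmf t)"

end

theory Submission
  imports Defs "HOL-Real_Asymp.Real_Asymp"
begin

(* Let u = v_l. As u is heavy and the children of every vertex are ordered by size, the right
   subtree of u has a set Z of at least alpha n / 2 leaves. All leaves are at depth 1, so two leaves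
   whose lowest common ancestor is w are at distance 2 h_w. Take a leaf x left of the root and a
   leaf y below the left child of u: every triple {x, y, z} with z in Z returns {y, z} with
   probability 1 / (h_u + 2). Take leaves a, b below the two children of v: every triple {a, b, z}
   returns {a, b} with probability h_u / (h_v + 2 h_u). By Hoeffding's inequality the empirical
   frequencies over Z are within delta = sqrt (ln n / n) of these values, except with probability
   4 exp (- alpha n delta^2) = 4 n^(- alpha). Inverting p = 1 / (r + 2) is Lipschitz for r in
   [0, 1], so h_u and h_v / h_u, hence h_v, are recovered up to 36 delta = 6 alpha^(-1) delta. *)

section \<open>Positions in trees\<close>

fun path_weight :: "real btree \<Rightarrow> bool list \<Rightarrow> real" where
  "path_weight t [] = 0"
| "path_weight (Leaf x) (b # p) = 0"
| "path_weight (Node wl l wr r) (b # p) = (if b then wr + path_weight r p else wl + path_weight l p)"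

definition first_leaf :: "'w btree \<Rightarrow> bool list \<Rightarrow> nat" where
  "first_leaf t p = hd (leafl (sub t p))"

lemma sub_Leaf [simp]: "sub (Leaf x) p = Leaf x"
  by (cases p) auto

lemma sub_append: "sub t (p @ q) = sub (sub t p) q"
  by (induction t p rule: sub.induct) auto

lemma leafl_not_Nil [simp]: "leafl t \<noteq> []"
  by (induction t) auto

lemma leaves_Node [simp]: "leaves (Node wl l wr r) = leaves l \<union> leaves r"
  by (simp add: leaves_def)

lemma NL_Node [simp]: "NL (Node wl l wr r) = NL l + NL r"
  by (simp add: NL_def)

lemma first_leaf_in_leaves: "first_leaf t p \<in> leaves (sub t p)"
  by (simp add: first_leaf_def leaves_def)

lemma leaves_sub: "leaves (sub t p) \<subseteq> leaves t"
  by (induction t p rule: sub.induct) auto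

lemma distinct_leafl_sub: "distinct (leafl t) \<Longrightarrow> distinct (leafl (sub t p))"
  by (induction t p rule: sub.induct) auto

lemma set_weights_sub: "set (weights (sub t p)) \<subseteq> set (weights t)"
  by (induction t p rule: sub.induct) auto

lemma ordered_sub: "ordered t \<Longrightarrow> ordered (sub t p)"
  by (induction t p rule: sub.induct) auto

lemma NL_sub_le: "NL (sub t p) \<le> NL t"
  by (induction t p rule: sub.induct) (auto simp: NL_def)

lemma sub_topology: "sub (topology t) p = topology (sub t p)"
  unfolding topology_def by (induction t p rule: sub.induct) auto

lemma leafl_topology [simp]: "leafl (topology t) = leafl t"
  unfolding topology_def by (induction t) auto

lemma is_internal_sub_Node:
  assumes "is_internal (sub t p)"
  obtains wl wr where "sub t p = Node wl (sub t (p @ [False])) wr (sub t (p @ [True]))"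
  using assms by (cases "sub t p") (auto simp: sub_append)

lemma is_internal_sub_prefix: "is_internal (sub t (p @ q)) \<Longrightarrow> is_internal (sub t p)"
  by (cases "sub t p") (auto simp: sub_append)

lemma leaves_sub_append: "leaves (sub t (p @ q)) \<subseteq> leaves (sub t p)"
  by (simp add: sub_append leaves_sub)

lemma leaves_Node_disjoint: "distinct (leafl (Node wl l wr r)) \<Longrightarrow> leaves l \<inter> leaves r = {}"
  by (auto simp: leaves_def)

lemma leaves_sub_left_right_disjoint:
  assumes "distinct (leafl t)" "is_internal (sub t p)"
  shows "leaves (sub t (p @ False # q)) \<inter> leaves (sub t (p @ True # q')) = {}"
proof -
  obtain wl wr where "sub t p = Node wl (sub t (p @ [False])) wr (sub t (p @ [True]))"
    using assms(2) by (rule is_internal_sub_Node)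
  moreover have "distinct (leafl (sub t p))"
    using assms(1) by (rule distinct_leafl_sub)
  ultimately have "leaves (sub t (p @ [False])) \<inter> leaves (sub t (p @ [True])) = {}"
    by (metis leaves_Node_disjoint)
  moreover have "leaves (sub t (p @ b # q'')) \<subseteq> leaves (sub t (p @ [b]))" for b q''
    using leaves_sub[of "sub t (p @ [b])" q''] by (simp flip: sub_append)
  ultimately show ?thesis
    by blast
qed

section \<open>Distances and heights\<close>

lemma path_weight_nonneg: "\<forall>w\<in>set (weights t). 0 \<le> w \<Longrightarrow> 0 \<le> path_weight t p"
  by (induction t p rule: path_weight.induct) auto

lemma rootdist_nonneg: "\<forall>w\<in>set (weights t). 0 \<le> w \<Longrightarrow> 0 \<le> rootdist t a"
  by (induction t a rule: rootdist.induct) auto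

lemma rootdist_sub:
  "distinct (leafl t) \<Longrightarrow> a \<in> leaves (sub t p) \<Longrightarrow>
   rootdist t a = path_weight t p + rootdist (sub t p) a"
proof (induction t p rule: sub.induct)
  case (3 wl l wr r b p)
  then have "leaves l \<inter> leaves r = {}"
    by (intro leaves_Node_disjoint)
  with 3 show ?case
    using leaves_sub[of l p] leaves_sub[of r p] by auto
qed auto

lemma dist_t_sub:
  "distinct (leafl t) \<Longrightarrow> a \<in> leaves (sub t p) \<Longrightarrow> b \<in> leaves (sub t p) \<Longrightarrow>
   dist_t t a b = dist_t (sub t p) a b"
proof (induction t p rule: sub.induct)
  case (3 wl l wr r c p)
  then have "leaves l \<inter> leaves r = {}"
    by (intro leaves_Node_disjoint)
  with 3 show ?case
    using leaves_sub[of l p] leaves_sub[of r p] by auto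
qed auto

lemma dist_t_commute:
  "distinct (leafl t) \<Longrightarrow> a \<in> leaves t \<Longrightarrow> b \<in> leaves t \<Longrightarrow> dist_t t a b = dist_t t b a"
proof (induction t)
  case (Node wl l wr r)
  then have "leaves l \<inter> leaves r = {}"
    by (intro leaves_Node_disjoint)
  with Node show ?case
    by auto
qed simp

lemma dist_t_nonneg: "\<forall>w\<in>set (weights t). 0 \<le> w \<Longrightarrow> 0 \<le> dist_t t a b"
  by (induction t a b rule: dist_t.induct) (auto intro!: add_nonneg_nonneg rootdist_nonneg)

lemma rootdist_sub_unit_depth:
  assumes "distinct (leafl t)" "\<forall>a\<in>leaves t. rootdist t a = 1" "a \<in> leaves (sub t p)"
  shows "rootdist (sub t p) a = height_at t p"
proof -
  have "rootdist (sub t p) b = 1 - path_weight t p" if "b \<in> leaves (sub t p)" for b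
  proof -
    have "rootdist t b = 1"
      using assms(2) leaves_sub that by blast
    then show ?thesis
      using rootdist_sub[OF assms(1) that] by simp
  qed
  then show ?thesis
    using assms(3) first_leaf_in_leaves[of t p] by (simp add: height_at_def first_leaf_def)
qed

lemma height_at_Nil_unit_depth:
  "\<forall>a\<in>leaves t. rootdist t a = 1 \<Longrightarrow> height_at t [] = 1"
  using first_leaf_in_leaves[of t "[]"] by (simp add: height_at_def first_leaf_def)

lemma height_at_nonneg: "\<forall>w\<in>set (weights t). 0 \<le> w \<Longrightarrow> 0 \<le> height_at t p"
  unfolding height_at_def using set_weights_sub[of t p] by (simp add: subset_iff rootdist_nonneg)

lemma height_at_pos:
  assumes "\<forall>w\<in>set (weights t). 0 < w" "is_internal (sub t p)"
  shows "0 < height_at t p"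
proof -
  obtain wl l wr r where lr: "sub t p = Node wl l wr r"
    using assms(2) by (cases "sub t p") auto
  have "\<forall>w\<in>set (weights (Node wl l wr r)). 0 < w"
    using assms(1) set_weights_sub[of t p] by (auto simp only: lr)
  then have "0 < wl" and "\<forall>w\<in>set (weights l). 0 \<le> w"
    by (simp_all add: order_less_imp_le)
  then have "0 < wl" and "0 \<le> rootdist l (hd (leafl l))"
    by (simp_all add: rootdist_nonneg)
  moreover have "hd (leafl l) \<in> leaves l"
    by (simp add: leaves_def)
  ultimately show ?thesis
    by (simp add: height_at_def lr)
qed

lemma height_at_append_le:
  assumes "distinct (leafl t)" "\<forall>a\<in>leaves t. rootdist t a = 1"
    "\<forall>w\<in>set (weights t). 0 \<le> w"
  shows "height_at t (p @ q) \<le> height_at t p"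
proof -
  let ?a = "first_leaf t (p @ q)"
  have a: "?a \<in> leaves (sub (sub t p) q)"
    using first_leaf_in_leaves[of t "p @ q"] by (simp add: sub_append)
  then have "?a \<in> leaves (sub t p)"
    using leaves_sub by blast
  then have "height_at t p = path_weight (sub t p) q + height_at t (p @ q)"
    using rootdist_sub[OF distinct_leafl_sub[OF assms(1)] a]
      rootdist_sub_unit_depth[OF assms(1,2), of ?a p]
      rootdist_sub_unit_depth[OF assms(1,2), of ?a "p @ q"] a
    by (simp add: sub_append)
  moreover have "0 \<le> path_weight (sub t p) q"
    using assms(3) set_weights_sub[of t p] by (blast intro: path_weight_nonneg)
  ultimately show ?thesis
    by linarith
qed

lemma dist_t_Node_across:
  assumes "distinct (leafl (Node wl l wr r))" "a \<in> leaves l" "b \<in> leaves r"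
  shows "dist_t (Node wl l wr r) a b = rootdist (Node wl l wr r) a + rootdist (Node wl l wr r) b"
  using assms leaves_Node_disjoint[OF assms(1)] by (auto simp: disjoint_iff)

lemma dist_t_across:
  assumes "distinct (leafl t)" "\<forall>a\<in>leaves t. rootdist t a = 1" "is_internal (sub t p)"
    "a \<in> leaves (sub t (p @ [False]))" "b \<in> leaves (sub t (p @ [True]))"
  shows "dist_t t a b = 2 * height_at t p" "dist_t t b a = 2 * height_at t p"
proof -
  obtain wl wr where p: "sub t p = Node wl (sub t (p @ [False])) wr (sub t (p @ [True]))"
    using assms(3) by (rule is_internal_sub_Node)
  have ab: "a \<in> leaves (sub t p)" "b \<in> leaves (sub t p)"
    using assms(4,5) by (simp_all add: p)
  have "dist_t (sub t p) a b = rootdist (sub t p) a + rootdist (sub t p) b"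
    unfolding p using distinct_leafl_sub[OF assms(1), of p] assms(4,5)
    by (intro dist_t_Node_across) (simp_all only: p)
  then show "dist_t t a b = 2 * height_at t p"
    using dist_t_sub[OF assms(1) ab] rootdist_sub_unit_depth[OF assms(1,2) ab(1)]
      rootdist_sub_unit_depth[OF assms(1,2) ab(2)] by simp
  moreover have "dist_t t a b = dist_t t b a"
    using ab leaves_sub[of t p] by (intro dist_t_commute[OF assms(1)]) auto
  ultimately show "dist_t t b a = 2 * height_at t p"
    by simp
qed

section \<open>Heavy vertices\<close>

lemma heavy_rightmost_upto_rm_f:
  assumes "heavy t n []" "k \<le> rm_f t n"
  shows "heavy t n (replicate k True)"
proof (rule ccontr)
  define P where "P = (\<lambda>j. valid_pos t (replicate j True) \<and> heavy t n (replicate j True))"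
  assume not_heavy: "\<not> heavy t n (replicate k True)"
  have below_k: "j < k" if "P j" for j
  proof (rule ccontr)
    assume "\<not> j < k"
    then obtain d where "j = k + d"
      using le_Suc_ex not_less by blast
    then have "sub t (replicate j True) = sub (sub t (replicate k True)) (replicate d True)"
      by (simp add: replicate_add sub_append)
    then have "NL (sub t (replicate j True)) \<le> NL (sub t (replicate k True))"
      by (simp add: NL_sub_le)
    then show False
      using that not_heavy by (auto simp: P_def heavy_def)
  qed
  have "P 0"
    using assms(1) by (simp add: P_def)
  then have "P (Greatest P)"
    using below_k by (metis GreatestI_nat less_imp_le)
  then have "Greatest P < k"
    by (rule below_k)
  moreover have "rm_f t n = Greatest P"
    by (simp add: rm_f_def P_def)
  ultimately show False
    using assms(2) by simp
qed

lemma NL_le_twice_right_child: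
  assumes "ordered t" "is_internal (sub t p)"
  shows "NL (sub t p) \<le> 2 * NL (sub t (p @ [True]))"
proof -
  obtain wl wr where p: "sub t p = Node wl (sub t (p @ [False])) wr (sub t (p @ [True]))"
    using assms(2) by (rule is_internal_sub_Node)
  have "ordered (sub t p)"
    using assms(1) by (rule ordered_sub)
  then show ?thesis
    by (subst p) (auto simp: p)
qed

section \<open>The noise model\<close>

lemma pmf_triple_pmf:
  assumes "distinct (leafl t)" "{a, b, c} \<subseteq> leaves t" "a \<noteq> b" "a \<noteq> c" "b \<noteq> c"
    and "\<forall>w\<in>set (weights t). 0 \<le> w" "0 < dist_t t a b + dist_t t b c + dist_t t a c"
  shows "pmf (triple_pmf t {a, b, c}) {a, b} =
    (dist_t t a c + dist_t t b c) / (2 * (dist_t t a b + dist_t t b c + dist_t t a c))"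
proof -
  let ?S = "{a, b, c}" and ?D = "2 * (dist_t t a b + dist_t t b c + dist_t t a c)"
  let ?f = "excl_weight t ?S"
  have sym: "dist_t t x y = dist_t t y x" if "x \<in> ?S" "y \<in> ?S" for x y
    using assms(1,2) that by (intro dist_t_commute) auto
  have D: "(\<Sum>x\<in>?S. \<Sum>y\<in>?S - {x}. dist_t t x y) = ?D"
    using assms(3-5) sym by (simp add: insert_Diff_if)
  have f: "?f a = (dist_t t a b + dist_t t a c) / ?D"
    "?f b = (dist_t t a b + dist_t t b c) / ?D"
    "?f c = (dist_t t a c + dist_t t b c) / ?D"
    unfolding excl_weight_def D using assms(3-5) sym by (simp_all add: insert_Diff_if)
  have f_outside: "?f x = 0" if "x \<notin> ?S" for x
    using that by (simp add: excl_weight_def)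
  have "0 \<le> dist_t t x y" for x y
    using assms(6) by (rule dist_t_nonneg)
  then have f_nonneg: "0 \<le> ?f x" for x
    using f f_outside[of x] assms(7) by (cases "x \<in> ?S") (auto intro!: divide_nonneg_pos add_nonneg_nonneg)
  have "(\<Sum>x\<in>?S. ?f x) =
      ((dist_t t a b + dist_t t a c) + (dist_t t a b + dist_t t b c) + (dist_t t a c + dist_t t b c)) / ?D"
    using assms(3-5) by (simp add: f add_divide_distrib)
  also have "\<dots> = 1"
    using assms(7) by simp
  finally have "(\<Sum>x\<in>?S. ?f x) = 1" .
  then have "(\<integral>\<^sup>+x. ennreal (?f x) \<partial>count_space UNIV) = 1"
    using f_outside f_nonneg by (subst nn_integral_count_space'[of ?S]) (auto simp: sum_ennreal)
  then have "pmf (embed_pmf ?f) c = ?f c"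
    using f_nonneg by (intro pmf_embed_pmf) auto
  moreover have "(\<lambda>x. ?S - {x}) -` {{a, b}} = {c}"
    using assms(3-5) by (auto simp: insert_Diff_if split: if_splits)
  ultimately show ?thesis
    unfolding triple_pmf_def pmf_map by (simp add: measure_pmf_single f)
qed

definition empirical_freq ::
    "nat set set \<Rightarrow> (nat set \<Rightarrow> nat set) \<Rightarrow> (nat set \<Rightarrow> nat set) \<Rightarrow> real" where
  "empirical_freq I g Q = (\<Sum>S\<in>I. of_bool (Q S = g S)) / real (card I)"

lemma finite_triples: "finite (triples n)"
  by (rule finite_subset[of _ "Pow {0..<n}"]) (auto simp: triples_def)

lemma outcome_pmf_component:
  "S \<in> triples n \<Longrightarrow> map_pmf (\<lambda>Q. Q S) (outcome_pmf t n) = triple_pmf t S"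
  unfolding outcome_pmf_def by (simp add: Pi_pmf_component[OF finite_triples])

lemma empirical_freq_concentration:
  assumes "I \<subseteq> triples n" "I \<noteq> {}" "\<And>S. S \<in> I \<Longrightarrow> pmf (triple_pmf t S) (g S) = p" "0 \<le> \<delta>"
  shows "measure_pmf.prob (outcome_pmf t n) {Q. \<delta> \<le> \<bar>empirical_freq I g Q - p\<bar>}
           \<le> 2 * exp (- 2 * real (card I) * \<delta>\<^sup>2)"
proof -
  let ?M = "measure_pmf (outcome_pmf t n)"
  let ?X = "\<lambda>S Q. of_bool (Q S = g S) :: real"
  have "finite I"
    using assms(1) finite_triples by (rule finite_subset)
  then have card_pos: "0 < card I"
    using assms(2) by (simp add: card_gt_0_iff)
  have "prob_space.indep_vars ?M (\<lambda>_. count_space UNIV) (\<lambda>S Q. Q S) (triples n)"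
    unfolding outcome_pmf_def by (rule indep_vars_Pi_pmf[OF finite_triples])
  then have indep: "prob_space.indep_vars ?M (\<lambda>_. borel) ?X I"
    by (intro prob_space.indep_vars_compose2[OF measure_pmf.prob_space_axioms
          prob_space.indep_vars_subset[OF measure_pmf.prob_space_axioms _ assms(1)]]) auto
  have mean: "measure_pmf.expectation (outcome_pmf t n) (?X S) = p" if "S \<in> I" for S
  proof -
    have "?X S = indicator ((\<lambda>Q. Q S) -` {g S})"
      by (auto simp: indicator_def)
    then have "measure_pmf.expectation (outcome_pmf t n) (?X S)
        = measure_pmf.prob (map_pmf (\<lambda>Q. Q S) (outcome_pmf t n)) {g S}"
      by simp
    also have "\<dots> = pmf (triple_pmf t S) (g S)"
      using that assms(1) by (auto simp: outcome_pmf_component measure_pmf_single)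
    finally show ?thesis
      using assms(3)[OF that] by simp
  qed
  interpret Hoeffding_ineq ?M I ?X "\<lambda>_. 0" "\<lambda>_. 1" "real (card I) * p"
    by unfold_locales (use \<open>finite I\<close> indep mean in auto)
  have "measure_pmf.prob (outcome_pmf t n)
          {Q \<in> space ?M. real (card I) * \<delta> \<le> \<bar>(\<Sum>S\<in>I. ?X S Q) - real (card I) * p\<bar>}
        \<le> 2 * exp (- 2 * (real (card I) * \<delta>)\<^sup>2 / (\<Sum>S\<in>I. (1 - 0)\<^sup>2))"
    using assms(4) card_pos by (intro Hoeffding_ineq_abs_ge) auto
  moreover have "real (card I) * \<delta> \<le> \<bar>s - real (card I) * p\<bar> \<longleftrightarrow> \<delta> \<le> \<bar>s / real (card I) - p\<bar>" for s
  proof -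
    have "\<bar>s - real (card I) * p\<bar> = real (card I) * \<bar>s / real (card I) - p\<bar>"
      using card_pos by (simp add: field_simps flip: abs_mult)
    then show ?thesis
      using card_pos by simp
  qed
  ultimately show ?thesis
    using card_pos by (simp add: empirical_freq_def power2_eq_square mult_ac)
qed

lemma triples_through_pair:
  assumes "a \<noteq> b" "a \<notin> Z" "b \<notin> Z" "insert a (insert b Z) \<subseteq> {0..<n}"
  shows "(\<lambda>z. {a, b, z}) ` Z \<subseteq> triples n" "card ((\<lambda>z. {a, b, z}) ` Z) = card Z"
proof -
  show "(\<lambda>z. {a, b, z}) ` Z \<subseteq> triples n"
    using assms by (auto simp: triples_def card_insert_if)
  have "inj_on (\<lambda>z. {a, b, z}) Z"
  proof (rule inj_onI)
    fix z z' assume "z \<in> Z" "z' \<in> Z" "{a, b, z} = {a, b, z'}"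
    then show "z = z'"
      using assms(2,3) by (metis insertE insertI1 insert_commute singletonD)
  qed
  then show "card ((\<lambda>z. {a, b, z}) ` Z) = card Z"
    by (rule card_image)
qed

section \<open>The estimator\<close>

lemma inverse_minus_two_error:
  fixes x m \<delta> :: real
  assumes "0 \<le> x" "x \<le> 1" "0 \<le> \<delta>" "\<delta> \<le> 1/12" "\<bar>m - 1 / (x + 2)\<bar> < \<delta>"
  shows "\<bar>(1 / m - 2) - x\<bar> \<le> 12 * \<delta>"
proof -
  define p where "p = 1 / (x + 2)"
  have p: "1/3 \<le> p" "p \<le> 1/2"
    using assms(1,2) by (auto simp: p_def field_simps)
  have m: "1/4 \<le> m"
    using assms(4,5) p unfolding p_def[symmetric] by linarith
  have x: "x = 1 / p - 2"
    using assms(1) by (simp add: p_def)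
  have "(1 / m - 2) - x = (p - m) / (m * p)"
    unfolding x using m p by (simp add: field_simps)
  also have "\<bar>\<dots>\<bar> = \<bar>p - m\<bar> / (m * p)"
    using m p by (simp add: abs_div)
  also have "\<dots> \<le> \<delta> / (1/12)"
  proof (rule frac_le)
    show "\<bar>p - m\<bar> \<le> \<delta>"
      using assms(5) unfolding p_def[symmetric] by linarith
    show "1/12 \<le> m * p"
      using mult_mono[OF m p(1)] m by linarith
  qed (use assms(3) in auto)
  finally show ?thesis
    by simp
qed

lemma product_estimate_error:
  fixes hu hv m1 m2 \<delta> :: real
  assumes "0 < hu" "hu \<le> 1" "0 \<le> hv" "hv \<le> hu" "0 \<le> \<delta>" "\<delta> \<le> 1/12"
    and "\<bar>m1 - 1 / (hu + 2)\<bar> < \<delta>" "\<bar>m2 - hu / (hv + 2 * hu)\<bar> < \<delta>"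
  shows "\<bar>(1 / m2 - 2) * (1 / m1 - 2) - hv\<bar> \<le> 36 * \<delta>"
proof -
  define r where "r = hv / hu"
  define a where "a = 1 / m2 - 2"
  define b where "b = 1 / m1 - 2"
  have r: "0 \<le> r" "r \<le> 1"
    using assms(1-4) by (auto simp: r_def field_simps)
  have "hu / (hv + 2 * hu) = 1 / (r + 2)"
    using assms(1) by (simp add: r_def field_simps)
  then have err_a: "\<bar>a - r\<bar> \<le> 12 * \<delta>"
    unfolding a_def using inverse_minus_two_error[OF r assms(5,6)] assms(8) by simp
  have err_b: "\<bar>b - hu\<bar> \<le> 12 * \<delta>"
    unfolding b_def using inverse_minus_two_error assms(1,2,5-7) by simp
  then have "\<bar>b\<bar> \<le> 2"
    using assms(1,2,6) by linarith
  have "hv = r * hu"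
    using assms(1) by (simp add: r_def)
  then have "a * b - hv = (a - r) * b + r * (b - hu)"
    by (simp add: algebra_simps)
  then have "\<bar>a * b - hv\<bar> \<le> \<bar>a - r\<bar> * \<bar>b\<bar> + r * \<bar>b - hu\<bar>"
    using r(1) by (metis abs_mult abs_of_nonneg abs_triangle_ineq)
  also have "\<dots> \<le> 12 * \<delta> * 2 + 1 * (12 * \<delta>)"
    using err_a err_b \<open>\<bar>b\<bar> \<le> 2\<close> r assms(5) by (intro add_mono mult_mono) auto
  finally show ?thesis
    by (simp add: a_def b_def)
qed

(* takeWhile id v is the vertex v_l of the rightmost path whose left subtree contains v. *)
definition height_estimate :: "unit btree \<Rightarrow> (nat set \<Rightarrow> nat set) \<Rightarrow> bool list \<Rightarrow> real" where
  "height_estimate T Q v =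
    (let u = takeWhile id v;
         x = first_leaf T [False]; y = first_leaf T (u @ [False]);
         a = first_leaf T (v @ [False]); b = first_leaf T (v @ [True]);
         Z = leaves (sub T (u @ [True]));
         m1 = empirical_freq ((\<lambda>z. {x, y, z}) ` Z) (\<lambda>S. S - {x}) Q;
         m2 = empirical_freq ((\<lambda>z. {a, b, z}) ` Z) (\<lambda>_. {a, b}) Q
     in (1 / m2 - 2) * (1 / m1 - 2))"

lemma takeWhile_id_replicate: "takeWhile id (replicate l True @ False # q) = replicate l True"
  by (induction l) auto

locale left_heavy_vertex =
  fixes t :: "real btree" and n l :: nat and q :: "bool list"
  assumes distinct_leafl: "distinct (leafl t)"
    and leaves_eq: "leaves t = {0..<n}"
    and ordered: "ordered t"
    and unit_depth: "\<forall>a\<in>leaves t. rootdist t a = 1"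
    and weights_pos: "\<forall>w\<in>set (weights t). 0 < w"
    and l_pos: "1 \<le> l"
    and l_le_rm_f: "l \<le> rm_f t n"
    and v_internal: "is_internal (sub t (replicate l True @ False # q))"
begin

abbreviation u where "u \<equiv> replicate l True"
abbreviation v where "v \<equiv> replicate l True @ False # q"
abbreviation hu where "hu \<equiv> height_at t u"
abbreviation hv where "hv \<equiv> height_at t v"
abbreviation x0 where "x0 \<equiv> first_leaf t [False]"
abbreviation y0 where "y0 \<equiv> first_leaf t (u @ [False])"
abbreviation a0 where "a0 \<equiv> first_leaf t (u @ False # q @ [False])"
abbreviation b0 where "b0 \<equiv> first_leaf t (u @ False # q @ [True])"
abbreviation Z where "Z \<equiv> leaves (sub t (u @ [True]))"
abbreviation root_triples where "root_triples \<equiv> (\<lambda>z. {x0, y0, z}) ` Z"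
abbreviation vertex_triples where "vertex_triples \<equiv> (\<lambda>z. {a0, b0, z}) ` Z"

lemma u_Cons: "u = True # replicate (l - 1) True"
  using l_pos by (cases l) auto

lemma u_internal: "is_internal (sub t u)"
  using v_internal by (rule is_internal_sub_prefix)

lemma root_internal: "is_internal (sub t [])"
  using u_internal u_Cons by (metis append_Nil is_internal_sub_prefix)

lemma NL_eq: "NL t = n"
  using distinct_card[OF distinct_leafl] leaves_eq by (simp add: NL_def leaves_def)

lemma n_ge_2: "2 \<le> n"
proof -
  obtain wl r wr r' where "t = Node wl r wr r'"
    using root_internal by (cases t) auto
  moreover have "1 \<le> NL r" "1 \<le> NL r'"
    by (simp_all add: NL_def Suc_leI)
  ultimately show ?thesis
    using NL_eq by simp
qed

lemma u_heavy: "heavy t n u"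
  using n_ge_2 NL_eq l_le_rm_f by (intro heavy_rightmost_upto_rm_f) (auto simp: heavy_def alpha_def)

lemma card_Z: "alpha * real n / 2 \<le> real (card Z)"
proof -
  have "card Z = NL (sub t (u @ [True]))"
    using distinct_card[OF distinct_leafl_sub[OF distinct_leafl]] by (simp add: leaves_def NL_def)
  moreover have "alpha * real n + 1 \<le> real (NL (sub t u))"
    using u_heavy by (simp add: heavy_def)
  moreover have "NL (sub t u) \<le> 2 * NL (sub t (u @ [True]))"
    using ordered u_internal by (rule NL_le_twice_right_child)
  ultimately show ?thesis
    by linarith
qed

lemma weights_nonneg: "\<forall>w\<in>set (weights t). 0 \<le> w"
  using weights_pos by (simp add: order_less_imp_le)

lemma leaves_below_u:
  "y0 \<in> leaves (sub t (u @ [False]))" "a0 \<in> leaves (sub t (u @ [False]))"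
  "b0 \<in> leaves (sub t (u @ [False]))"
proof -
  have "leaves (sub t (u @ False # q @ [c])) \<subseteq> leaves (sub t (u @ [False]))" for c
    using leaves_sub_append[of t "u @ [False]" "q @ [c]"] by simp
  then show "y0 \<in> leaves (sub t (u @ [False]))" "a0 \<in> leaves (sub t (u @ [False]))"
    "b0 \<in> leaves (sub t (u @ [False]))"
    by (meson first_leaf_in_leaves subsetD)+
qed

lemma leaves_in_range: "insert x0 (insert y0 (insert a0 (insert b0 Z))) \<subseteq> {0..<n}"
  using leaves_eq leaves_sub first_leaf_in_leaves by blast

lemma leaves_distinct:
  assumes "z \<in> Z"
  shows "x0 \<noteq> y0" "x0 \<noteq> z" "y0 \<noteq> z" "a0 \<noteq> b0" "a0 \<noteq> z" "b0 \<noteq> z"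
proof -
  let ?r = "replicate (l - 1) True"
  have split_root: "leaves (sub t ([] @ False # [])) \<inter> leaves (sub t ([] @ True # r)) = {}" for r
    using distinct_leafl root_internal by (rule leaves_sub_left_right_disjoint)
  have split_u: "leaves (sub t (u @ False # r)) \<inter> leaves (sub t (u @ True # [])) = {}" for r
    using distinct_leafl u_internal by (rule leaves_sub_left_right_disjoint)
  have split_v: "leaves (sub t (u @ False # q @ [False])) \<inter> leaves (sub t (u @ False # q @ [True])) = {}"
    using leaves_sub_left_right_disjoint[OF distinct_leafl v_internal, of "[]" "[]"] by simp
  have u_b: "u @ [b] = [] @ True # (?r @ [b])" for b
    using u_Cons by simp
  have x0: "x0 \<in> leaves (sub t ([] @ False # []))"
    and y0: "y0 \<in> leaves (sub t ([] @ True # (?r @ [False])))"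
    and z: "z \<in> leaves (sub t ([] @ True # (?r @ [True])))"
    using assms unfolding u_b[symmetric] by (simp_all only: first_leaf_in_leaves append_Nil)
  show "x0 \<noteq> y0"
    using split_root[of "?r @ [False]"] x0 y0 by (metis disjoint_iff)
  show "x0 \<noteq> z"
    using split_root[of "?r @ [True]"] x0 z by (metis disjoint_iff)
  have "y0 \<in> leaves (sub t (u @ False # []))" "z \<in> leaves (sub t (u @ True # []))"
    "a0 \<in> leaves (sub t (u @ False # (q @ [False])))" "b0 \<in> leaves (sub t (u @ False # (q @ [True])))"
    using assms first_leaf_in_leaves[of t] by simp_all
  then show "y0 \<noteq> z" "a0 \<noteq> z" "b0 \<noteq> z"
    using split_u[of "[]"] split_u[of "q @ [False]"] split_u[of "q @ [True]"] by (metis disjoint_iff)+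
  show "a0 \<noteq> b0"
    using split_v first_leaf_in_leaves[of t] by (metis disjoint_iff)
qed

lemma height_bounds: "0 < hu" "hu \<le> 1" "0 \<le> hv" "hv \<le> hu"
proof -
  note nonneg = weights_nonneg
  show "0 < hu"
    using weights_pos u_internal by (rule height_at_pos)
  show "hu \<le> 1"
    using height_at_append_le[OF distinct_leafl unit_depth nonneg, of "[]" u]
      height_at_Nil_unit_depth[OF unit_depth] by simp
  show "0 \<le> hv"
    using nonneg by (rule height_at_nonneg)
  show "hv \<le> hu"
    using height_at_append_le[OF distinct_leafl unit_depth nonneg, of u "False # q"] by simp
qed

lemma leaf_distances:
  assumes "z \<in> Z"
  shows "dist_t t x0 y0 = 2" "dist_t t y0 x0 = 2" "dist_t t x0 z = 2" "dist_t t z x0 = 2"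
    "dist_t t y0 z = 2 * hu" "dist_t t z y0 = 2 * hu"
    "dist_t t a0 z = 2 * hu" "dist_t t z a0 = 2 * hu" "dist_t t b0 z = 2 * hu" "dist_t t z b0 = 2 * hu"
    "dist_t t a0 b0 = 2 * hv" "dist_t t b0 a0 = 2 * hv"
proof -
  have "y0 \<in> leaves (sub t ([] @ [True]))" "z \<in> leaves (sub t ([] @ [True]))"
    using assms first_leaf_in_leaves[of t "u @ [False]"] leaves_sub_append[of t "[True]"] u_Cons
    by (metis append_Cons append_Nil subsetD)+
  then show "dist_t t x0 y0 = 2" "dist_t t y0 x0 = 2" "dist_t t x0 z = 2" "dist_t t z x0 = 2"
    using dist_t_across[OF distinct_leafl unit_depth root_internal, of x0]
      height_at_Nil_unit_depth[OF unit_depth] first_leaf_in_leaves[of t "[False]"] by simp_all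
  show "dist_t t y0 z = 2 * hu" "dist_t t z y0 = 2 * hu"
    "dist_t t a0 z = 2 * hu" "dist_t t z a0 = 2 * hu" "dist_t t b0 z = 2 * hu" "dist_t t z b0 = 2 * hu"
    using dist_t_across[OF distinct_leafl unit_depth u_internal] assms leaves_below_u by simp_all
  show "dist_t t a0 b0 = 2 * hv" "dist_t t b0 a0 = 2 * hv"
    using dist_t_across[OF distinct_leafl unit_depth v_internal, of a0 b0]
      first_leaf_in_leaves[of t "u @ False # q @ [False]"] first_leaf_in_leaves[of t "u @ False # q @ [True]"]
    by simp_all
qed

lemma pmf_root_triple:
  assumes "z \<in> Z"
  shows "pmf (triple_pmf t {x0, y0, z}) ({x0, y0, z} - {x0}) = 1 / (hu + 2)"
proof -
  note ne = leaves_distinct[OF assms] and d = leaf_distances[OF assms]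
  have "{x0, y0, z} = {y0, z, x0}" "{x0, y0, z} - {x0} = {y0, z}"
    using ne by auto
  moreover have "pmf (triple_pmf t {y0, z, x0}) {y0, z} =
      (dist_t t y0 x0 + dist_t t z x0) / (2 * (dist_t t y0 z + dist_t t z x0 + dist_t t y0 x0))"
    using ne leaves_in_range assms height_bounds(1) weights_nonneg
    by (intro pmf_triple_pmf[OF distinct_leafl]) (auto simp: leaves_eq d)
  ultimately show ?thesis
    using height_bounds(1) by (simp add: d field_simps)
qed

lemma pmf_vertex_triple:
  assumes "z \<in> Z"
  shows "pmf (triple_pmf t {a0, b0, z}) {a0, b0} = hu / (hv + 2 * hu)"
proof -
  note ne = leaves_distinct[OF assms] and d = leaf_distances[OF assms]
  have "pmf (triple_pmf t {a0, b0, z}) {a0, b0} =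
      (dist_t t a0 z + dist_t t b0 z) / (2 * (dist_t t a0 b0 + dist_t t b0 z + dist_t t a0 z))"
    using ne leaves_in_range assms height_bounds weights_nonneg
    by (intro pmf_triple_pmf[OF distinct_leafl]) (auto simp: leaves_eq d)
  then show ?thesis
    using height_bounds by (simp add: d field_simps)
qed

lemma height_estimate_eq:
  "height_estimate (topology t) Q v =
     (1 / empirical_freq vertex_triples (\<lambda>_. {a0, b0}) Q - 2) *
     (1 / empirical_freq root_triples (\<lambda>S. S - {x0}) Q - 2)"
  by (simp add: height_estimate_def Let_def takeWhile_id_replicate first_leaf_def sub_topology leaves_def)

lemma deviation_prob_le:
  assumes "I \<subseteq> triples n" "card I = card Z"
    and "\<And>S. S \<in> I \<Longrightarrow> pmf (triple_pmf t S) (g S) = p" "0 \<le> \<delta>"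
  shows "measure_pmf.prob (outcome_pmf t n) {Q. \<delta> \<le> \<bar>empirical_freq I g Q - p\<bar>}
           \<le> 2 * exp (- alpha * real n * \<delta>\<^sup>2)"
proof -
  have "I \<noteq> {}"
    using assms(2) by (auto simp: leaves_def)
  then have "measure_pmf.prob (outcome_pmf t n) {Q. \<delta> \<le> \<bar>empirical_freq I g Q - p\<bar>}
      \<le> 2 * exp (- 2 * real (card Z) * \<delta>\<^sup>2)"
    using empirical_freq_concentration[OF assms(1) _ assms(3,4)] assms(2) by simp
  also have "\<dots> \<le> 2 * exp (- alpha * real n * \<delta>\<^sup>2)"
    using card_Z by (simp add: mult_right_mono)
  finally show ?thesis .
qed

theorem height_estimate_accurate:
  assumes "0 \<le> \<delta>" "\<delta> \<le> 1/12"
  shows "1 - 4 * exp (- alpha * real n * \<delta>\<^sup>2) \<le>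
    measure_pmf.prob (outcome_pmf t n) {Q. \<bar>height_estimate (topology t) Q v - hv\<bar> \<le> 36 * \<delta>}"
proof -
  let ?M = "outcome_pmf t n"
  define E1 where "E1 = {Q. \<delta> \<le> \<bar>empirical_freq root_triples (\<lambda>S. S - {x0}) Q - 1 / (hu + 2)\<bar>}"
  define E2 where "E2 = {Q. \<delta> \<le> \<bar>empirical_freq vertex_triples (\<lambda>_. {a0, b0}) Q - hu / (hv + 2 * hu)\<bar>}"
  have "x0 \<notin> Z" "y0 \<notin> Z" "a0 \<notin> Z" "b0 \<notin> Z" "x0 \<noteq> y0" "a0 \<noteq> b0"
    using leaves_distinct first_leaf_in_leaves[of t "u @ [True]"] by blast+
  then have root: "root_triples \<subseteq> triples n" "card root_triples = card Z"
    and vertex: "vertex_triples \<subseteq> triples n" "card vertex_triples = card Z"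
    using leaves_in_range triples_through_pair[of x0 y0 Z n] triples_through_pair[of a0 b0 Z n]
    by auto
  have "measure_pmf.prob ?M E1 \<le> 2 * exp (- alpha * real n * \<delta>\<^sup>2)"
    unfolding E1_def by (rule deviation_prob_le) (use root pmf_root_triple assms(1) in auto)
  moreover have "measure_pmf.prob ?M E2 \<le> 2 * exp (- alpha * real n * \<delta>\<^sup>2)"
    unfolding E2_def by (rule deviation_prob_le) (use vertex pmf_vertex_triple assms(1) in auto)
  ultimately have "1 - 4 * exp (- alpha * real n * \<delta>\<^sup>2) \<le> 1 - measure_pmf.prob ?M (E1 \<union> E2)"
    using measure_Un_le[of E1 "measure_pmf ?M" E2] by simp
  also have "\<dots> = measure_pmf.prob ?M (UNIV - (E1 \<union> E2))"
    using measure_pmf.prob_compl[of "E1 \<union> E2" ?M] by simp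
  also have "\<dots> \<le> measure_pmf.prob ?M {Q. \<bar>height_estimate (topology t) Q v - hv\<bar> \<le> 36 * \<delta>}"
  proof (rule measure_pmf.finite_measure_mono)
    show "UNIV - (E1 \<union> E2) \<subseteq> {Q. \<bar>height_estimate (topology t) Q v - hv\<bar> \<le> 36 * \<delta>}"
    proof
      fix Q
      assume "Q \<in> UNIV - (E1 \<union> E2)"
      then have "\<bar>empirical_freq root_triples (\<lambda>S. S - {x0}) Q - 1 / (hu + 2)\<bar> < \<delta>"
        "\<bar>empirical_freq vertex_triples (\<lambda>_. {a0, b0}) Q - hu / (hv + 2 * hu)\<bar> < \<delta>"
        by (auto simp: E1_def E2_def not_le)
      then show "Q \<in> {Q. \<bar>height_estimate (topology t) Q v - hv\<bar> \<le> 36 * \<delta>}"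
        using product_estimate_error[OF height_bounds assms] by (simp add: height_estimate_eq)
    qed
  qed simp
  finally show ?thesis .
qed

end

lemma left_heavy_vertexI:
  assumes "distinct (leafl t)" "leaves t = {0..<n}" "ordered t" "\<forall>a\<in>leaves t. rootdist t a = 1"
    and "\<forall>w\<in>set (weights t). c \<le> w" "0 < c"
    and "1 \<le> l" "l \<le> rm_f t n" "is_internal (sub t (replicate l True @ False # q))"
  shows "left_heavy_vertex t n l q"
  using assms by unfold_locales fastforce+

lemma eventually_height_estimate_correct:
  assumes "0 < \<epsilon>"
  shows "\<forall>\<^sub>F n in sequentially. \<forall>t l q. left_heavy_vertex t n l q \<longrightarrow>
    1 - \<epsilon> \<le> measure_pmf.prob (outcome_pmf t n)
      {Q. \<bar>height_estimate (topology t) Q (replicate l True @ False # q)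
            - height_at t (replicate l True @ False # q)\<bar>
          \<le> 6 * (1 / alpha) * sqrt (ln (real n) / real n)}"
proof -
  have "((\<lambda>n::nat. 4 * exp (- alpha * ln (real n))) \<longlongrightarrow> 0) sequentially"
    unfolding alpha_def by real_asymp
  moreover have "((\<lambda>n::nat. sqrt (ln (real n) / real n)) \<longlongrightarrow> 0) sequentially"
    by real_asymp
  ultimately have "\<forall>\<^sub>F n in sequentially.
      4 * exp (- alpha * ln (real n)) < \<epsilon> \<and> sqrt (ln (real n) / real n) < 1/12 \<and> 1 \<le> n"
    using assms by (intro eventually_conj order_tendstoD(2) eventually_ge_at_top) auto
  then show ?thesis
  proof eventually_elim
    case (elim n)
    define \<delta> where "\<delta> = sqrt (ln (real n) / real n)"
    have "0 \<le> ln (real n)"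
      using elim by simp
    then have "alpha * real n * \<delta>\<^sup>2 = alpha * ln (real n)" and "0 \<le> \<delta>"
      using elim by (simp_all add: \<delta>_def)
    moreover have "6 * (1 / alpha) * sqrt (ln (real n) / real n) = 36 * \<delta>"
      by (simp add: alpha_def \<delta>_def)
    ultimately show ?case
      using elim left_heavy_vertex.height_estimate_accurate[of _ n _ _ \<delta>] by (fastforce simp: \<delta>_def)
  qed
qed

theorem lemma8:
  "\<exists>\<tau>\<^sub>0 > 0. \<forall>\<tau> \<ge> \<tau>\<^sub>0. \<exists>C > 0. \<exists>alg :: unit btree \<Rightarrow> (nat set \<Rightarrow> nat set) \<Rightarrow> bool list \<Rightarrow> real.
     \<forall>\<epsilon> > 0. \<exists>N. \<forall>n \<ge> N. \<forall>(t :: real btree) l q.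
       distinct (leafl t) \<and> leaves t = {0..<n} \<and> ordered t \<and>
       (\<forall>a \<in> leaves t. rootdist t a = 1) \<and>
       (\<forall>w \<in> set (weights t). w \<ge> \<tau> * ln (real n) / sqrt (real n)) \<and>
       1 \<le> l \<and> l \<le> rm_f t n \<and>
       valid_pos t (replicate l True @ False # q) \<and>
       is_internal (sub t (replicate l True @ False # q))
       \<longrightarrow>
       measure_pmf.prob (outcome_pmf t n)
         {Q. \<bar>alg (topology t) Q (replicate l True @ False # q)
               - height_at t (replicate l True @ False # q)\<bar>
             \<le> C * (1 / alpha) * sqrt (ln (real n) / real n)} \<ge> 1 - \<epsilon>"
  unfolding eventually_sequentially[symmetric]
proof (rule exI[of _ 1], intro conjI allI impI exI[of _ 6] exI[of _ height_estimate], goal_cases)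
  case (3 \<tau> \<epsilon>)
  have "\<forall>\<^sub>F n in sequentially. 0 < \<tau> * ln (real n) / sqrt (real n)"
    using eventually_ge_at_top[of "2::nat"] by eventually_elim (use 3 in \<open>simp add: ln_gt_zero\<close>)
  with eventually_height_estimate_correct[OF \<open>0 < \<epsilon>\<close>] show ?case
    by eventually_elim (blast intro: left_heavy_vertexI)
qed simp_all

end
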